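(* Fix $m\ge 1$, $n\ge 0$, and let $\mathsf{G3Ldm}_{n}^{m}+\mathsf{PR}$ be the calculus $\mathsf{G3Ldm}_{n}^{m}$ extended with the propagation rules $(\mathsf{Pr}_i)$ for all $i\in Ag$ (see context). Then: (i) all sequents of the form $\mathcal{R}, w:\phi, w:\overline{\phi},\Gamma$ are derivable; (ii) substitution of labels is height-preserving admissible; (iii) all inference rules are height-preserving invertible; (iv) the rules $(\mathsf{wk})$: from $\mathcal{R},\Gamma$ infer $\mathcal{R},\mathcal{R}',\Gamma',\Gamma$; $(\mathsf{ctr})_{\mathsf{R}}$: from $\mathcal{R},\mathcal{R}',\mathcal{R}',\Gamma$ infer $\mathcal{R},\mathcal{R}',\Gamma$; and $(\mathsf{ctr})_{\mathsf{F}}$: from $\mathcal{R},\Gamma',\Gamma',\Gamma$ infer $\mathcal{R},\Gamma',\Gamma$ are height-preserving admissible.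
   Context: Language. $Ag=\{1,\dots,m\}$, $Var$ a countable set of propositional variables; formulas $\phi ::= p \mid \overline{p} \mid (\phi\wedge\phi) \mid (\phi\vee\phi) \mid \Box\phi \mid \Diamond\phi \mid [i]\phi \mid \langle i\rangle\phi$. $\overline{\phi}$ is obtained by swapping $p/\overline{p}$, $\wedge/\vee$, $\Box/\Diamond$, $[i]/\langle i\rangle$. Labelled sequents $\mathcal{R},\Gamma$: $\mathcal{R}$ a multiset of relational atoms $\mathcal{R}_ixy$ ($i\in Ag$, $x,y$ labels), $\Gamma$ a multiset of labelled formulas $x:\phi$. Derivations are finite trees whose leaves are $(\mathsf{id})$ instances; height = length of longest branch. Height-preserving admissibility of a rule means: if its premise is derivable with height $\le h$, so is its conclusion. Height-preserving invertibility means: if a conclusion of an instance is derivable with height $\le h$, so is each premise. Substitution admissibility: if $\Lambda$ is derivable with height $\le h$ then so is $\Lambda(y/x)$. Rules of $\mathsf{G3Ldm}_{n}^{m}$ (premise(s) / conclusion): $(\mathsf{id})$: / $\mathcal{R}, w:p, w:\overline{p},\Gamma$. $(\wedge)$: $\mathcal{R}, w:\phi\wedge\psi, w:\phi,\Gamma$ and $\mathcal{R}, w:\phi\wedge\psi, w:\psi,\Gamma$ / $\mathcal{R}, w:\phi\wedge\psi,\Gamma$. $(\vee)$: $\mathcal{R}, w:\phi\vee\psi, w:\phi, w:\psi,\Gamma$ / $\mathcal{R}, w:\phi\vee\psi,\Gamma$. $([i])$: $\mathcal{R},\mathcal{R}_iwv, v:\phi,\Gamma$ / $\mathcal{R}, w:[i]\phi,\Gamma$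 ($v$ fresh). $(\Box)$: $\mathcal{R}, w:\Box\phi, v:\phi,\Gamma$ / $\mathcal{R}, w:\Box\phi,\Gamma$ ($v$ fresh). $(\Diamond)$: $\mathcal{R}, w:\Diamond\phi, u:\phi,\Gamma$ / $\mathcal{R}, w:\Diamond\phi,\Gamma$. $(\mathsf{IOA})$: $\mathcal{R},\mathcal{R}_1u_1v,\dots,\mathcal{R}_mu_mv,\Gamma$ / $\mathcal{R},\Gamma$ ($v$ fresh). $(\langle i\rangle)$: $\mathcal{R},\mathcal{R}_iwu, w:\langle i\rangle\phi, u:\phi,\Gamma$ / $\mathcal{R},\mathcal{R}_iwu, w:\langle i\rangle\phi,\Gamma$. $(\mathsf{refl}_i)$: $\mathcal{R},\mathcal{R}_iww,\Gamma$ / $\mathcal{R},\Gamma$. $(\mathsf{eucl}_i)$: $\mathcal{R},\mathcal{R}_iwu,\mathcal{R}_iwv,\mathcal{R}_iuv,\Gamma$ / $\mathcal{R},\mathcal{R}_iwu,\mathcal{R}_iwv,\Gamma$. $(\mathsf{APC}^i_n)$ (only if $n>0$): premises $\mathcal{R},\mathcal{R}_iw_kw_j,\Gamma$ for all $0\le k\le n-1$, $k+1\le j\le n$ / $\mathcal{R},\Gamma$. "Fresh" means not occurring in the conclusion. One copy of the indexed rules for each $i\in Ag$. Propagation rule $(\mathsf{Pr}_i)$: $\mathcal{R}, w:\langle i\rangle\phi, u:\phi,\Gamma$ / $\mathcal{R}, w:\langle i\rangle\phi,\Gamma$, applicable only if $w=u$ or there are labels $w=z_0,z_1,\dots,z_k=u$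 ($k\ge1$) such that for each $l<k$, $\mathcal{R}_iz_lz_{l+1}\in\mathcal{R}$ or $\mathcal{R}_iz_{l+1}z_l\in\mathcal{R}$. (This is the condition that the propagation automaton of the sequent from $w$ to $u$, whose transitions in both directions are given by the $\mathcal{R}_i$-atoms, accepts a string in the language $\langle i\rangle^*$.) *)

theory Defs
  imports "HOL-Library.Multiset"
begin

text \<open>Formulas in negation normal form. Propositional variables and agents are
natural numbers; the set of agents is Ag = {1..m}.
Atm p = p, NAtm p = overline p, Bx = Box, Dm = Diamond, Ag i = [i], DAg i = <i>.\<close>

datatype fm =
    Atm nat
  | NAtm nat
  | Conj fm fm
  | Disj fm fm
  | Bx fm
  | Dm fm
  | Ag nat fm
  | DAg nat fm

fun neg :: "fm \<Rightarrow> fm" where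
  "neg (Atm p) = NAtm p"
| "neg (NAtm p) = Atm p"
| "neg (Conj a b) = Disj (neg a) (neg b)"
| "neg (Disj a b) = Conj (neg a) (neg b)"
| "neg (Bx a) = Dm (neg a)"
| "neg (Dm a) = Bx (neg a)"
| "neg (Ag i a) = DAg i (neg a)"
| "neg (DAg i a) = Ag i (neg a)"

fun agents :: "fm \<Rightarrow> nat set" where
  "agents (Atm p) = {}"
| "agents (NAtm p) = {}"
| "agents (Conj a b) = agents a \<union> agents b"
| "agents (Disj a b) = agents a \<union> agents b"
| "agents (Bx a) = agents a"
| "agents (Dm a) = agents a"
| "agents (Ag i a) = insert i (agents a)"
| "agents (DAg i a) = insert i (agents a)"

type_synonym lab = nat
text \<open>A relational atom (i, x, y) stands for R_i x y.\<close>
type_synonym ratom = "nat \<times> lab \<times> lab"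
type_synonym lfm = "lab \<times> fm"
type_synonym seq = "ratom multiset \<times> lfm multiset"

definition wf_seq :: "nat \<Rightarrow> seq \<Rightarrow> bool" where
  "wf_seq m S \<longleftrightarrow> (\<forall>(i, x, y) \<in># fst S. i \<in> {1..m}) \<and> (\<forall>(x, \<phi>) \<in># snd S. agents \<phi> \<subseteq> {1..m})"

definition labels :: "seq \<Rightarrow> lab set" where
  "labels S = (\<Union>(i, x, y) \<in> set_mset (fst S). {x, y}) \<union> fst ` set_mset (snd S)"

definition ipath :: "ratom multiset \<Rightarrow> nat \<Rightarrow> lab \<Rightarrow> lab \<Rightarrow> bool" where
  "ipath R i w u \<longleftrightarrow> (\<lambda>x y. (i, x, y) \<in># R \<or> (i, y, x) \<in># R)\<^sup>*\<^sup>* w u"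

inductive g3_rule :: "nat \<Rightarrow> nat \<Rightarrow> seq list \<Rightarrow> seq \<Rightarrow> bool" for m n where
  conjR: "g3_rule m n [(R, add_mset (w, Conj a b) (add_mset (w, a) G)),
                       (R, add_mset (w, Conj a b) (add_mset (w, b) G))]
                      (R, add_mset (w, Conj a b) G)"
| disjR: "g3_rule m n [(R, add_mset (w, Disj a b) (add_mset (w, a) (add_mset (w, b) G)))]
                      (R, add_mset (w, Disj a b) G)"
| agR: "i \<in> {1..m} \<Longrightarrow> v \<notin> labels (R, add_mset (w, Ag i a) G) \<Longrightarrow>
        g3_rule m n [(add_mset (i, w, v) R, add_mset (v, a) G)] (R, add_mset (w, Ag i a) G)"
| boxR: "v \<notin> labels (R, add_mset (w, Bx a) G) \<Longrightarrow>
        g3_rule m n [(R, add_mset (w, Bx a) (add_mset (v, a) G))] (R, add_mset (w, Bx a) G)"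
| diaR: "g3_rule m n [(R, add_mset (w, Dm a) (add_mset (u, a) G))] (R, add_mset (w, Dm a) G)"
| ioa: "v \<notin> labels (R, G) \<Longrightarrow>
        g3_rule m n [(mset (map (\<lambda>i. (i, u i, v)) [1..<Suc m]) + R, G)] (R, G)"
| dagR: "i \<in> {1..m} \<Longrightarrow>
        g3_rule m n [(add_mset (i, w, u) R, add_mset (w, DAg i a) (add_mset (u, a) G))]
                    (add_mset (i, w, u) R, add_mset (w, DAg i a) G)"
| reflR: "i \<in> {1..m} \<Longrightarrow> g3_rule m n [(add_mset (i, w, w) R, G)] (R, G)"
| euclR: "i \<in> {1..m} \<Longrightarrow>
        g3_rule m n [(add_mset (i, w, u) (add_mset (i, w, v) (add_mset (i, u, v) R)), G)]
                    (add_mset (i, w, u) (add_mset (i, w, v) R), G)"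
| apcR: "0 < n \<Longrightarrow> i \<in> {1..m} \<Longrightarrow>
        g3_rule m n [(add_mset (i, ws k, ws j) R, G). k \<leftarrow> [0..<n], j \<leftarrow> [Suc k..<Suc n]] (R, G)"

inductive pr_rule :: "nat \<Rightarrow> seq list \<Rightarrow> seq \<Rightarrow> bool" for m where
  prR: "i \<in> {1..m} \<Longrightarrow> ipath R i w u \<Longrightarrow>
        pr_rule m [(R, add_mset (w, DAg i a) (add_mset (u, a) G))] (R, add_mset (w, DAg i a) G)"

definition rule_PR :: "nat \<Rightarrow> nat \<Rightarrow> seq list \<Rightarrow> seq \<Rightarrow> bool" where
  "rule_PR m n Ps C \<longleftrightarrow> g3_rule m n Ps C \<or> pr_rule m Ps C"

text \<open>deriv m n h S: S is derivable in G3Ldm_n^m + PR with height at most h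
(an (id) leaf has height 0).\<close>
inductive deriv :: "nat \<Rightarrow> nat \<Rightarrow> nat \<Rightarrow> seq \<Rightarrow> bool" for m n where
  idR: "deriv m n h (R, add_mset (w, Atm p) (add_mset (w, NAtm p) G))"
| ruleR: "rule_PR m n Ps C \<Longrightarrow> (\<forall>P \<in> set Ps. deriv m n h P) \<Longrightarrow> deriv m n (Suc h) C"

definition lsub :: "lab \<Rightarrow> lab \<Rightarrow> lab \<Rightarrow> lab" where
  "lsub y x z = (if z = x then y else z)"

text \<open>subst_seq y x S = S(y/x).\<close>
definition subst_seq :: "lab \<Rightarrow> lab \<Rightarrow> seq \<Rightarrow> seq" where
  "subst_seq y x S =
    (image_mset (\<lambda>(i, a, b). (i, lsub y x a, lsub y x b)) (fst S),
     image_mset (\<lambda>(a, \<phi>). (lsub y x a, \<phi>)) (snd S))"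

end

theory Submission
  imports Defs "HOL-Library.Product_Plus"
begin

text \<open>
  Everything reduces to facts about single rule instances. An instance stays an instance
  after renaming labels and adding context, as long as its eigenlabels stay fresh; rule
  induction then gives height-preserving substitution and weakening, where in each step the
  eigenlabels are first moved out of the way. Every premise contains the relational atoms of
  its conclusion, and all of its formulas except the principal formula of a ([i]) step; hence
  invertibility is weakening, except for ([i]), whose inversion is proved by induction on the
  height: a non-principal [i]-formula can be removed from an instance and replaced by its
  unpacked form. Contraction goes the same way. The interesting cases are a duplicated
  relational atom principal in (eucl), where the instance degenerates to one of (refl), and a
  duplicated [i]-formula principal in ([i]), where the other copy is inverted, the two
  eigenlabels are identified and the resulting duplicates are contracted.
\<close>

definition rename_seq :: "(lab \<Rightarrow> lab) \<Rightarrow> seq \<Rightarrow> seq" where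
  "rename_seq f S =
    (image_mset (\<lambda>(i, a, b). (i, f a, f b)) (fst S), image_mset (\<lambda>(a, \<phi>). (f a, \<phi>)) (snd S))"

lemma rename_seq_Pair [simp]:
  "rename_seq f (R, G) = (image_mset (\<lambda>(i, a, b). (i, f a, f b)) R, image_mset (\<lambda>(a, \<phi>). (f a, \<phi>)) G)"
  by (simp add: rename_seq_def)

lemma labels_simps [simp]:
  "labels ({#}, {#}) = {}"
  "labels (add_mset (i, a, b) R, G) = insert a (insert b (labels (R, G)))"
  "labels (R, add_mset (a, \<phi>) G) = insert a (labels (R, G))"
  by (auto simp: labels_def)

lemma labels_add: "labels (S + E) = labels S \<union> labels E"
  by (auto simp: labels_def)

lemma finite_labels: "finite (labels S)"
  by (auto simp: labels_def)

lemma ex_fresh_label: "\<exists>v. v \<notin> labels S"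
  using ex_new_if_finite[OF infinite_UNIV_nat finite_labels] by blast

lemma labels_ratom: "(i, a, b) \<in># fst S \<Longrightarrow> b \<in> labels S"
  by (force simp: labels_def)

lemma ipath_mono: "ipath R i w u \<Longrightarrow> set_mset R \<subseteq> set_mset R' \<Longrightarrow> ipath R' i w u"
  unfolding ipath_def by (erule rtranclp_mono[THEN predicate2D, rotated]) auto

lemma ipath_image:
  "ipath R i w u \<Longrightarrow> ipath (image_mset (\<lambda>(i, a, b). (i, f a, f b)) R) i (f w) (f u)"
  unfolding ipath_def
proof (induction rule: rtranclp_induct)
  case (step y z)
  then show ?case by (force intro: rtranclp.rtrancl_into_rtrancl)
qed simp

lemma g3_rule_rule_PR: "g3_rule m n Ps C \<Longrightarrow> rule_PR m n Ps C"
  by (simp add: rule_PR_def)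

lemma pr_rule_rule_PR: "pr_rule m Ps C \<Longrightarrow> rule_PR m n Ps C"
  by (simp add: rule_PR_def)

lemma rule_PR_rename_add:
  assumes "rule_PR m n Ps C"
    and fresh: "\<forall>P\<in>set Ps. \<forall>x\<in>labels P - labels C. f x \<notin> labels (rename_seq f C + E)"
  shows "rule_PR m n (map (\<lambda>P. rename_seq f P + E) Ps) (rename_seq f C + E)"
proof -
  obtain R' G' where E: "E = (R', G')"
    by (cases E)
  from assms(1) consider "g3_rule m n Ps C" | "pr_rule m Ps C"
    unfolding rule_PR_def by blast
  then show ?thesis
  proof cases
    case 1
    then show ?thesis
    proof cases
      case (conjR R w a b G)
      then show ?thesis
        using E by (auto intro!: g3_rule_rule_PR g3_rule.conjR)
    next
      case (disjR R w a b G)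
      then show ?thesis
        using E by (auto intro!: g3_rule_rule_PR g3_rule.disjR)
    next
      case (agR i v R w a G)
      moreover from this have "f v \<notin> labels (rename_seq f C + E)"
        using fresh by simp
      ultimately show ?thesis
        using E by (auto intro!: g3_rule_rule_PR g3_rule.agR)
    next
      case (boxR v R w a G)
      moreover from this have "f v \<notin> labels (rename_seq f C + E)"
        using fresh by simp
      ultimately show ?thesis
        using E by (auto intro!: g3_rule_rule_PR g3_rule.boxR)
    next
      case (diaR R w a u G)
      then show ?thesis
        using E by (auto intro!: g3_rule_rule_PR g3_rule.diaR)
    next
      case (ioa v R G u)
      \<comment> \<open>for m = 0 the rule adds no atom and v need not occur in the premise\<close>
      obtain v' where v': "v' \<notin> labels (rename_seq f C + E)" "m = 0 \<or> v' = f v"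
      proof (cases "m = 0")
        case True
        then show ?thesis
          using that ex_fresh_label by blast
      next
        case False
        then have "(m, u m, v) \<in># fst (hd Ps)"
          using ioa by simp
        then have "v \<in> labels (hd Ps)"
          by (rule labels_ratom)
        moreover have "hd Ps \<in> set Ps"
          using ioa by simp
        ultimately show ?thesis
          using that fresh ioa(2,3) by blast
      qed
      then show ?thesis
        using g3_rule.ioa[of v' "fst (rename_seq f C + E)" "snd (rename_seq f C + E)" m n "f \<circ> u"] ioa E
        by (auto simp: add.assoc multiset.map_comp comp_def intro!: g3_rule_rule_PR)
    next
      case (dagR i w u R a G)
      then show ?thesis
        using E by (auto intro!: g3_rule_rule_PR g3_rule.dagR)
    next
      case (reflR i w R G)
      then show ?thesis
        using E by (auto intro!: g3_rule_rule_PR g3_rule.reflR)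
    next
      case (euclR i w u v R G)
      then show ?thesis
        using E by (auto intro!: g3_rule_rule_PR g3_rule.euclR)
    next
      case (apcR i ws R G)
      then show ?thesis
        using g3_rule.apcR[of n i m "f \<circ> ws" "fst (rename_seq f C + E)" "snd (rename_seq f C + E)"] E
        by (auto simp: map_concat comp_def intro!: g3_rule_rule_PR)
    qed
  next
    case 2
    then show ?thesis
    proof cases
      case (prR i R w u a G)
      then have "ipath (fst (rename_seq f C + E)) i (f w) (f u)"
        using E by (auto intro: ipath_mono[OF ipath_image])
      then show ?thesis
        using prR E by (auto intro!: pr_rule_rule_PR pr_rule.prR)
    qed
  qed
qed

lemma rename_seq_cong: "\<forall>x\<in>labels S. f x = g x \<Longrightarrow> rename_seq f S = rename_seq g S"
  by (cases S) (force simp: labels_def intro!: image_mset_cong)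

lemma rename_seq_id_on: "\<forall>x\<in>labels S. f x = x \<Longrightarrow> rename_seq f S = S"
  using rename_seq_cong[of S f id] by (cases S) simp

lemma rename_seq_id [simp]: "rename_seq id S = S"
  by (simp add: rename_seq_id_on)

lemma ex_agree_on_avoiding:
  assumes "finite A"
  shows "\<exists>g :: lab \<Rightarrow> lab. (\<forall>x\<in>B. g x = f x) \<and> (\<forall>x. x \<notin> B \<longrightarrow> g x \<notin> A)"
proof -
  define K where "K = Suc (Max (insert 0 A))"
  have "\<forall>a\<in>A. a < K"
    using assms by (auto simp: K_def le_imp_less_Suc)
  then show ?thesis
    by (intro exI[of _ "\<lambda>x. if x \<in> B then f x else x + K"]) auto
qed

lemma deriv_mono: "deriv m n h S \<Longrightarrow> h \<le> h' \<Longrightarrow> deriv m n h' S"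
proof (induction h S arbitrary: h' rule: deriv.induct)
  case (idR h R w p G)
  show ?case by (rule deriv.idR)
next
  case (ruleR Ps C h)
  then show ?case by (cases h') (auto intro: deriv.ruleR)
qed

lemma deriv_rename_add: "deriv m n h S \<Longrightarrow> deriv m n h (rename_seq f S + E)"
proof (induction h S arbitrary: f E rule: deriv.induct)
  case (idR h R w p G)
  show ?case
    by (cases E) (simp add: deriv.idR)
next
  case (ruleR Ps C h)
  obtain g where g: "\<forall>x\<in>labels C. g x = f x" "\<forall>x. x \<notin> labels C \<longrightarrow> g x \<notin> labels (rename_seq f C + E)"
    using ex_agree_on_avoiding[OF finite_labels] by blast
  have C: "rename_seq g C = rename_seq f C"
    using g(1) by (rule rename_seq_cong)
  have "rule_PR m n (map (\<lambda>P. rename_seq g P + E) Ps) (rename_seq f C + E)"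
    using rule_PR_rename_add[OF ruleR.hyps(1), of g E] g(2) unfolding C by blast
  moreover have "\<forall>P\<in>set (map (\<lambda>P. rename_seq g P + E) Ps). deriv m n h P"
  proof
    fix P
    assume "P \<in> set (map (\<lambda>P. rename_seq g P + E) Ps)"
    then obtain Q where "Q \<in> set Ps" "P = rename_seq g Q + E"
      by auto
    then show "deriv m n h P"
      using ruleR.IH by blast
  qed
  ultimately show ?case
    by (rule deriv.ruleR)
qed

lemma deriv_weaken: "deriv m n h S \<Longrightarrow> deriv m n h (S + E)"
  using deriv_rename_add[of m n h S id E] by simp

lemma deriv_idR_mem:
  assumes "(w, Atm p) \<in># G" "(w, NAtm p) \<in># G"
  shows "deriv m n h (R, G)"
proof -
  obtain G\<^sub>1 where G\<^sub>1: "G = add_mset (w, Atm p) G\<^sub>1"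
    using assms(1) by (blast dest: multi_member_split)
  then have "(w, NAtm p) \<in># G\<^sub>1"
    using assms(2) by simp
  then obtain G\<^sub>2 where "G\<^sub>1 = add_mset (w, NAtm p) G\<^sub>2"
    by (blast dest: multi_member_split)
  then show ?thesis
    using G\<^sub>1 by (simp add: deriv.idR)
qed

text \<open>([i]) is the only rule whose principal formula does not persist into its premise.\<close>

definition ag_principal :: "nat \<Rightarrow> seq list \<Rightarrow> seq \<Rightarrow> lfm \<Rightarrow> bool" where
  "ag_principal m Ps C x \<longleftrightarrow> (\<exists>i w a v G. i \<in> {1..m} \<and> x = (w, Ag i a) \<and> snd C = add_mset x G \<and>
     v \<notin> labels C \<and> Ps = [(add_mset (i, w, v) (fst C), add_mset (v, a) G)])"

lemma rule_PR_premise_contains: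
  assumes "rule_PR m n Ps C" "P \<in> set Ps"
  shows "fst C \<subseteq># fst P \<and> (snd C \<subseteq># snd P \<or> (\<exists>x. ag_principal m Ps C x))"
  using assms(1) unfolding rule_PR_def
proof (elim disjE)
  assume "g3_rule m n Ps C"
  then show ?thesis
  proof cases
    case (conjR R w a b G)
    then show ?thesis using assms(2) by auto
  next
    case (agR i v R w a G)
    then have "ag_principal m Ps C (w, Ag i a)"
      by (simp add: ag_principal_def)
    moreover have "fst C \<subseteq># fst P"
      using agR assms(2) by simp
    ultimately show ?thesis by blast
  next
    case (apcR i ws R G)
    then show ?thesis using assms(2) by (auto simp del: upt_Suc)
  qed (use assms(2) in simp_all)
next
  assume "pr_rule m Ps C"
  then show ?thesis
    using assms(2) by cases simp
qed

lemma rule_PR_premise_count: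
  assumes "rule_PR m n Ps C" "\<not> ag_principal m Ps C x" "P \<in> set Ps"
  shows "count (snd C) x \<le> count (snd P) x"
  using rule_PR_premise_contains[OF assms(1,3)]
proof (elim conjE disjE exE)
  fix y
  assume "ag_principal m Ps C y"
  then obtain w i a v G where "y = (w, Ag i a)" "snd C = add_mset y G"
    "Ps = [(add_mset (i, w, v) (fst C), add_mset (v, a) G)]"
    unfolding ag_principal_def by blast
  moreover have "x \<noteq> y"
    using assms(2) \<open>ag_principal m Ps C y\<close> by blast
  ultimately show ?thesis
    using assms(3) by simp
qed (simp add: mset_subset_eq_count)

lemma add_mset_eq_add_msetD:
  assumes "add_mset x M = add_mset y N" "x \<noteq> y \<or> x \<in># M"
  shows "\<exists>K. M = add_mset y K \<and> N = add_mset x K"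
proof (cases "x = y")
  case True
  then have "M = N" "x \<in># M"
    using assms by auto
  then show ?thesis
    using True by (intro exI[of _ "M - {#x#}"]) simp
next
  case False
  then show ?thesis
    using assms(1) by (simp only: add_eq_conv_ex) blast
qed

lemma rule_PR_strip_fm:
  assumes "rule_PR m n Ps (R, add_mset x G)"
    and x: "x \<in># G \<or> (\<exists>w i a. x = (w, Ag i a)) \<and> \<not> ag_principal m Ps (R, add_mset x G) x"
  shows "rule_PR m n (map (\<lambda>P. (fst P, snd P - {#x#})) Ps) (R, G)"
proof -
  obtain x\<^sub>0 \<phi> where x_pair: "x = (x\<^sub>0, \<phi>)"
    by fastforce
  have split: "\<exists>K. G = add_mset y K \<and> G\<^sub>0 = add_mset x K"
    if "add_mset x G = add_mset y G\<^sub>0" "x \<noteq> y \<or> x \<in># G" for y G\<^sub>0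
    using add_mset_eq_add_msetD[OF that] .
  from assms(1) consider "g3_rule m n Ps (R, add_mset x G)" | "pr_rule m Ps (R, add_mset x G)"
    unfolding rule_PR_def by blast
  then show ?thesis
  proof cases
    case 1
    then show ?thesis
    proof cases
      case (conjR w a b G\<^sub>0)
      then obtain K where "G = add_mset (w, Conj a b) K" "G\<^sub>0 = add_mset x K"
        using split x by blast
      then show ?thesis
        using conjR by (auto intro!: g3_rule_rule_PR g3_rule.conjR)
    next
      case (disjR w a b G\<^sub>0)
      then obtain K where "G = add_mset (w, Disj a b) K" "G\<^sub>0 = add_mset x K"
        using split x by blast
      then show ?thesis
        using disjR by (auto intro!: g3_rule_rule_PR g3_rule.disjR)
    next
      case (agR i v w a G\<^sub>0)
      then have "x \<noteq> (w, Ag i a) \<or> x \<in># G"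
        using x by (auto simp: ag_principal_def)
      then obtain K where "G = add_mset (w, Ag i a) K" "G\<^sub>0 = add_mset x K"
        using split agR by blast
      then show ?thesis
        using agR x_pair by (auto intro!: g3_rule_rule_PR g3_rule.agR)
    next
      case (boxR v w a G\<^sub>0)
      then obtain K where "G = add_mset (w, Bx a) K" "G\<^sub>0 = add_mset x K"
        using split x by blast
      then show ?thesis
        using boxR x_pair by (auto intro!: g3_rule_rule_PR g3_rule.boxR)
    next
      case (diaR w a u G\<^sub>0)
      then obtain K where "G = add_mset (w, Dm a) K" "G\<^sub>0 = add_mset x K"
        using split x by blast
      then show ?thesis
        using diaR by (auto intro!: g3_rule_rule_PR g3_rule.diaR)
    next
      case (ioa v u)
      then have "v \<notin> labels (R, G)"
        using x_pair by simp
      then show ?thesis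
        using ioa g3_rule.ioa[of v R G m n u] by (simp add: g3_rule_rule_PR)
    next
      case (dagR i w u R\<^sub>0 a G\<^sub>0)
      then obtain K where "G = add_mset (w, DAg i a) K" "G\<^sub>0 = add_mset x K"
        using split x by blast
      then show ?thesis
        using dagR by (auto intro!: g3_rule_rule_PR g3_rule.dagR)
    next
      case (reflR i w)
      then show ?thesis
        by (auto intro!: g3_rule_rule_PR g3_rule.reflR)
    next
      case (euclR i w u v R\<^sub>0)
      then show ?thesis
        by (auto intro!: g3_rule_rule_PR g3_rule.euclR)
    next
      case (apcR i ws)
      then show ?thesis
        using g3_rule.apcR[of n i m ws R G] by (simp add: map_concat comp_def g3_rule_rule_PR del: upt_Suc)
    qed
  next
    case 2
    then show ?thesis
    proof cases
      case (prR i w u a G\<^sub>0)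
      then obtain K where "G = add_mset (w, DAg i a) K" "G\<^sub>0 = add_mset x K"
        using split x by blast
      then show ?thesis
        using prR by (auto intro!: pr_rule_rule_PR pr_rule.prR)
    qed
  qed
qed

lemma rule_PR_strip_ratom:
  assumes "rule_PR m n Ps (add_mset r R, G)" and r: "r \<in># R"
  shows "rule_PR m n (map (\<lambda>P. (fst P - {#r#}, snd P)) Ps) (R, G)"
proof -
  obtain j r\<^sub>1 r\<^sub>2 where r_triple: "r = (j, r\<^sub>1, r\<^sub>2)"
    by (cases r) blast
  have split: "\<exists>K. R = add_mset y K \<and> R\<^sub>0 = add_mset r K"
    if "add_mset r R = add_mset y R\<^sub>0" for y R\<^sub>0
    using add_mset_eq_add_msetD[OF that] r by blast
  from assms(1) consider "g3_rule m n Ps (add_mset r R, G)" | "pr_rule m Ps (add_mset r R, G)"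
    unfolding rule_PR_def by blast
  then show ?thesis
  proof cases
    case 1
    then show ?thesis
    proof cases
      case (conjR w a b G\<^sub>0)
      then show ?thesis
        by (auto intro!: g3_rule_rule_PR g3_rule.conjR)
    next
      case (disjR w a b G\<^sub>0)
      then show ?thesis
        by (auto intro!: g3_rule_rule_PR g3_rule.disjR)
    next
      case (agR i v w a G\<^sub>0)
      then have "v \<notin> labels (R, add_mset (w, Ag i a) G\<^sub>0)"
        using r_triple by simp
      then show ?thesis
        using agR g3_rule.agR[of i m v R w a G\<^sub>0 n] by (simp add: g3_rule_rule_PR)
    next
      case (boxR v w a G\<^sub>0)
      then show ?thesis
        using r_triple by (auto intro!: g3_rule_rule_PR g3_rule.boxR)
    next
      case (diaR w a u G\<^sub>0)
      then show ?thesis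
        by (auto intro!: g3_rule_rule_PR g3_rule.diaR)
    next
      case (ioa v u)
      then have "v \<notin> labels (R, G)"
        using r_triple by simp
      then show ?thesis
        using ioa r g3_rule.ioa[of v R G m n u] by (simp add: diff_union_single_conv g3_rule_rule_PR)
    next
      case (dagR i w u R\<^sub>0 a G\<^sub>0)
      then obtain K where "R = add_mset (i, w, u) K" "R\<^sub>0 = add_mset r K"
        using split by blast
      then show ?thesis
        using dagR by (auto intro!: g3_rule_rule_PR g3_rule.dagR)
    next
      case (reflR i w)
      then show ?thesis
        by (auto intro!: g3_rule_rule_PR g3_rule.reflR)
    next
      case (euclR i w u v R\<^sub>0)
      then obtain K where K: "R = add_mset (i, w, u) K" "add_mset (i, w, v) R\<^sub>0 = add_mset r K"
        using split by blast
      show ?thesis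
      proof (cases "r \<noteq> (i, w, v) \<or> r \<in># K")
        case True
        then obtain K' where "K = add_mset (i, w, v) K'" "R\<^sub>0 = add_mset r K'"
          using add_mset_eq_add_msetD[OF K(2)[symmetric]] by blast
        then show ?thesis
          using euclR K g3_rule.euclR[of i m n w u v K' G] by (simp add: g3_rule_rule_PR)
      next
        case False
        \<comment> \<open>the two principal atoms coincide, so the instance is one of (refl) in disguise\<close>
        then have "r = (i, w, v)" "r \<notin># K"
          by auto
        then have r_eq: "r = (i, w, u)" and "v = u"
          using K(1) r by auto
        have "Ps = [(add_mset r (add_mset r (add_mset (i, u, u) K)), G)]"
          using euclR(1) K(2) r_eq \<open>v = u\<close> by simp
        then have "map (\<lambda>P. (fst P - {#r#}, snd P)) Ps = [(add_mset (i, u, u) R, G)]"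
          using K(1) r_eq by (simp add: add_mset_commute)
        then show ?thesis
          using euclR g3_rule.reflR[of i m n u R G] by (simp add: g3_rule_rule_PR)
      qed
    next
      case (apcR i ws)
      then show ?thesis
        using g3_rule.apcR[of n i m ws R G] by (simp add: map_concat comp_def g3_rule_rule_PR del: upt_Suc)
    qed
  next
    case 2
    then show ?thesis
    proof cases
      case (prR i w u a G\<^sub>0)
      then have "ipath R i w u"
        using r by (auto elim: ipath_mono)
      then show ?thesis
        using prR by (auto intro!: pr_rule_rule_PR pr_rule.prR)
    qed
  qed
qed

lemma ag_principal_add:
  assumes "ag_principal m (map (\<lambda>P. P + E) Ps) (C + E) x" and "x \<notin># snd E"
  shows "ag_principal m Ps C x"
proof -
  obtain i w a v G where x: "i \<in> {1..m}" "x = (w, Ag i a)" and G: "snd C + snd E = add_mset x G"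
    and v: "v \<notin> labels (C + E)"
    and Ps: "map (\<lambda>P. P + E) Ps = [(add_mset (i, w, v) (fst C + fst E), add_mset (v, a) G)]"
    using assms(1) unfolding ag_principal_def by auto
  have "x \<in># snd C"
    using G assms(2) by (metis add_mset_add_single union_iff union_single_eq_member)
  then obtain G\<^sub>1 where G\<^sub>1: "snd C = add_mset x G\<^sub>1"
    by (blast dest: multi_member_split)
  obtain P where P: "Ps = [P]" "P + E = (add_mset (i, w, v) (fst C + fst E), add_mset (v, a) G)"
    using Ps by (cases Ps) auto
  have "fst P + fst E = add_mset (i, w, v) (fst C) + fst E" "snd P + snd E = add_mset (v, a) G\<^sub>1 + snd E"
    using P(2) G G\<^sub>1 by (auto simp: prod_eq_iff)
  then have "P = (add_mset (i, w, v) (fst C), add_mset (v, a) G\<^sub>1)"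
    by (simp add: prod_eq_iff)
  then show ?thesis
    unfolding ag_principal_def using x G\<^sub>1 v P(1) by (auto simp: labels_add)
qed

lemma rename_seq_fresh_label:
  assumes "v \<notin> labels (R, G)" "w \<noteq> v"
  shows "rename_seq (id(v := v')) (add_mset (i, w, v) R, add_mset (v, a) G) =
    (add_mset (i, w, v') R, add_mset (v', a) G)"
proof -
  have "rename_seq (id(v := v')) (R, G) = (R, G)"
    using assms(1) by (intro rename_seq_id_on) auto
  then show ?thesis
    using assms(2) by simp
qed

lemma deriv_rename_fresh_label:
  assumes "deriv m n h (add_mset (i, w, v) R, add_mset (v, a) G)" "v \<notin> labels (R, G)" "w \<noteq> v"
  shows "deriv m n h (add_mset (i, w, v') R, add_mset (v', a) G)"
  using deriv_rename_add[OF assms(1), of "id(v := v')" 0] rename_seq_fresh_label[OF assms(2,3)] by simp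

lemma rule_PR_Ag_inv:
  assumes "rule_PR m n Ps (R, add_mset (w, Ag i a) G)"
    and "\<not> ag_principal m Ps (R, add_mset (w, Ag i a) G) (w, Ag i a)"
    and "v \<notin> labels (R, add_mset (w, Ag i a) G)" "\<forall>P\<in>set Ps. v \<notin> labels P"
  shows "rule_PR m n (map (\<lambda>P. (add_mset (i, w, v) (fst P), add_mset (v, a) (snd P - {#(w, Ag i a)#}))) Ps)
    (add_mset (i, w, v) R, add_mset (v, a) G)"
proof -
  let ?x = "(w, Ag i a)" and ?C = "(R, add_mset (w, Ag i a) G)"
  define E where "E = ({#(i, w, v)#}, {#(v, a)#})"
  have "w \<noteq> v"
    using assms(3) by auto
  have "rule_PR m n (map (\<lambda>P. rename_seq id P + E) Ps) (rename_seq id ?C + E)"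
    using assms(3,4) by (intro rule_PR_rename_add[OF assms(1)]) (auto simp: E_def labels_add)
  then have weakened: "rule_PR m n (map (\<lambda>P. P + E) Ps) (?C + E)"
    by simp
  have nonprincipal: "\<not> ag_principal m (map (\<lambda>P. P + E) Ps) (?C + E) ?x"
    using assms(2) ag_principal_add \<open>w \<noteq> v\<close> by (fastforce simp: E_def)
  have CE: "?C + E = (add_mset (i, w, v) R, add_mset ?x (add_mset (v, a) G))"
    by (simp add: E_def add_mset_commute)
  have stripped: "rule_PR m n (map (\<lambda>P. (fst P, snd P - {#?x#})) (map (\<lambda>P. P + E) Ps))
      (add_mset (i, w, v) R, add_mset (v, a) G)"
    by (rule rule_PR_strip_fm[OF weakened[unfolded CE]]) (use nonprincipal[unfolded CE] in blast)
  have eq: "map (\<lambda>P. (fst P, snd P - {#?x#})) (map (\<lambda>P. P + E) Ps) =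
      map (\<lambda>P. (add_mset (i, w, v) (fst P), add_mset (v, a) (snd P - {#?x#}))) Ps"
    using \<open>w \<noteq> v\<close> by (simp add: E_def diff_union_swap[symmetric])
  show ?thesis
    using stripped unfolding eq .
qed

lemma deriv_Ag_inv:
  assumes "deriv m n h (R, add_mset (w, Ag i a) G)" and "v \<notin> labels (R, add_mset (w, Ag i a) G)"
  shows "deriv m n h (add_mset (i, w, v) R, add_mset (v, a) G)"
  using assms
proof (induction h "(R, add_mset (w, Ag i a) G)" arbitrary: R G v rule: deriv.induct)
  case (idR h R' w' p G')
  then have eq: "add_mset (w, Ag i a) G = add_mset (w', Atm p) (add_mset (w', NAtm p) G')"
    by simp
  have "(w', Atm p) \<in># G" "(w', NAtm p) \<in># G"
    using insert_noteq_member[OF eq] insert_noteq_member[OF eq[unfolded add_mset_commute[of "(w', Atm p)"]]]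
    by simp_all
  then have "(w', Atm p) \<in># add_mset (v, a) G" "(w', NAtm p) \<in># add_mset (v, a) G"
    by simp_all
  then show ?case
    by (rule deriv_idR_mem)
next
  case (ruleR Ps h R G v)
  let ?x = "(w, Ag i a)" and ?C = "(R, add_mset (w, Ag i a) G)"
  \<comment> \<open>invert with a label that is fresh for the premises as well, then rename it to v\<close>
  obtain v' where v': "v' \<notin> labels ?C \<union> \<Union> (labels ` set Ps)"
    using ex_new_if_finite[OF infinite_UNIV_nat] finite_labels by (metis List.finite_set finite_UN finite_Un)
  then have "w \<noteq> v'" "v' \<notin> labels (R, G)"
    by auto
  have "deriv m n (Suc h) (add_mset (i, w, v') R, add_mset (v', a) G)"
  proof (cases "ag_principal m Ps ?C ?x")
    case True
    then obtain v\<^sub>0 where "v\<^sub>0 \<notin> labels ?C" "Ps = [(add_mset (i, w, v\<^sub>0) R, add_mset (v\<^sub>0, a) G)]"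
      unfolding ag_principal_def by auto
    then have "deriv m n h (add_mset (i, w, v\<^sub>0) R, add_mset (v\<^sub>0, a) G)" "v\<^sub>0 \<notin> labels (R, G)" "w \<noteq> v\<^sub>0"
      using ruleR.hyps(2) by auto
    then have "deriv m n h (add_mset (i, w, v') R, add_mset (v', a) G)"
      by (rule deriv_rename_fresh_label)
    then show ?thesis
      using deriv_mono le_SucI by blast
  next
    case False
    have "deriv m n h (add_mset (i, w, v') (fst P), add_mset (v', a) (snd P - {#?x#}))"
      if P: "P \<in> set Ps" for P
    proof -
      have "?x \<in># snd P"
        using rule_PR_premise_count[OF ruleR.hyps(1) False P]
        by (simp add: Suc_le_eq) (meson count_greater_zero_iff le_less_trans zero_le)
      then obtain G\<^sub>P where G\<^sub>P: "snd P = add_mset ?x G\<^sub>P"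
        by (blast dest: multi_member_split)
      have "v' \<notin> labels P"
        using v' P by auto
      then have "deriv m n h (add_mset (i, w, v') (fst P), add_mset (v', a) G\<^sub>P)"
        using ruleR.hyps(2) P G\<^sub>P by (metis prod.collapse)
      then show ?thesis
        using G\<^sub>P by simp
    qed
    then have "\<forall>Q\<in>set (map (\<lambda>P. (add_mset (i, w, v') (fst P), add_mset (v', a) (snd P - {#?x#}))) Ps).
        deriv m n h Q"
      by auto
    moreover have "rule_PR m n (map (\<lambda>P. (add_mset (i, w, v') (fst P), add_mset (v', a) (snd P - {#?x#}))) Ps)
        (add_mset (i, w, v') R, add_mset (v', a) G)"
      using v' by (intro rule_PR_Ag_inv[OF ruleR.hyps(1) False]) auto
    ultimately show ?thesis
      by (blast intro: deriv.ruleR)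
  qed
  then show ?case
    using \<open>v' \<notin> labels (R, G)\<close> \<open>w \<noteq> v'\<close> by (rule deriv_rename_fresh_label)
qed

lemma deriv_rule_PR_inv:
  assumes "rule_PR m n Ps C" "deriv m n h C" "P \<in> set Ps"
  shows "deriv m n h P"
proof -
  have R: "fst C \<subseteq># fst P"
    using rule_PR_premise_contains[OF assms(1,3)] by blast
  consider "snd C \<subseteq># snd P" | x where "ag_principal m Ps C x"
    using rule_PR_premise_contains[OF assms(1,3)] by blast
  then show ?thesis
  proof cases
    case 1
    then have "P = C + (fst P - fst C, snd P - snd C)"
      using R by (simp add: prod_eq_iff)
    then show ?thesis
      using deriv_weaken[OF assms(2)] by metis
  next
    case 2
    then obtain i w a v G where C: "snd C = add_mset (w, Ag i a) G" "v \<notin> labels C"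
      and "Ps = [(add_mset (i, w, v) (fst C), add_mset (v, a) G)]"
      unfolding ag_principal_def by blast
    then have "P = (add_mset (i, w, v) (fst C), add_mset (v, a) G)"
      using assms(3) by simp
    then show ?thesis
      using deriv_Ag_inv[of m n h "fst C" w i a G v] assms(2) C by (cases C) simp
  qed
qed

lemma deriv_contract_ratom:
  "deriv m n h (add_mset r (add_mset r R), G) \<Longrightarrow> deriv m n h (add_mset r R, G)"
proof (induction h "(add_mset r (add_mset r R), G)" arbitrary: R G rule: deriv.induct)
  case idR
  then show ?case
    by (simp add: deriv.idR)
next
  case (ruleR Ps h R G)
  have stripped: "rule_PR m n (map (\<lambda>P. (fst P - {#r#}, snd P)) Ps) (add_mset r R, G)"
    using ruleR.hyps(1) by (rule rule_PR_strip_ratom) simp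
  have "deriv m n h (fst P - {#r#}, snd P)" if P: "P \<in> set Ps" for P
  proof -
    obtain D where D: "fst P = add_mset r (add_mset r R) + D"
      using rule_PR_premise_contains[OF ruleR.hyps(1) P] by (auto simp: mset_subset_eq_exists_conv)
    then have "deriv m n h (add_mset r (R + D), snd P)"
      using ruleR.hyps(2) P by (metis prod.collapse union_mset_add_mset_left)
    then show ?thesis
      using D by simp
  qed
  then have "\<forall>Q\<in>set (map (\<lambda>P. (fst P - {#r#}, snd P)) Ps). deriv m n h Q"
    by auto
  with stripped show ?case
    by (rule deriv.ruleR)
qed

lemma deriv_Ag_premise_duplicate:
  assumes "deriv m n h (add_mset (i, w, v) R, add_mset (v, a) (add_mset (w, Ag i a) G))"
    and "v \<notin> labels (R, add_mset (w, Ag i a) G)"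
  shows "deriv m n h (add_mset (i, w, v) R, add_mset (v, a) (add_mset (v, a) G))"
proof -
  obtain v\<^sub>2 where v\<^sub>2: "v\<^sub>2 \<notin> labels (add_mset (i, w, v) R, add_mset (w, Ag i a) (add_mset (v, a) G))"
    using ex_fresh_label by blast
  have "deriv m n h (add_mset (i, w, v) R, add_mset (w, Ag i a) (add_mset (v, a) G))"
    using assms(1) by (simp add: add_mset_commute)
  then have "deriv m n h (add_mset (i, w, v\<^sub>2) (add_mset (i, w, v) R), add_mset (v\<^sub>2, a) (add_mset (v, a) G))"
    using v\<^sub>2 by (rule deriv_Ag_inv)
  moreover have "v\<^sub>2 \<notin> labels (add_mset (i, w, v) R, add_mset (v, a) G)" "w \<noteq> v\<^sub>2"
    using v\<^sub>2 by auto
  ultimately have "deriv m n h (add_mset (i, w, v) (add_mset (i, w, v) R), add_mset (v, a) (add_mset (v, a) G))"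
    by (rule deriv_rename_fresh_label)
  then show ?thesis
    by (rule deriv_contract_ratom)
qed

lemma count_ge_2_split: "2 \<le> count M x \<Longrightarrow> M = add_mset x (add_mset x (M - {#x#} - {#x#}))"
  by (auto simp: multiset_eq_iff)

lemma deriv_contract_fm:
  "deriv m n h (R, add_mset x (add_mset x G)) \<Longrightarrow> deriv m n h (R, add_mset x G)"
proof (induction h arbitrary: R G x rule: less_induct)
  case (less h)
  from less.prems show ?case
  proof cases
    case (idR w p G')
    then have "(w, Atm p) \<in># add_mset x (add_mset x G)" "(w, NAtm p) \<in># add_mset x (add_mset x G)"
      by simp_all
    then have "(w, Atm p) \<in># add_mset x G" "(w, NAtm p) \<in># add_mset x G"
      by simp_all
    then show ?thesis
      by (rule deriv_idR_mem)
  next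
    case (ruleR Ps h')
    let ?C = "(R, add_mset x (add_mset x G))"
    show ?thesis
    proof (cases "ag_principal m Ps ?C x")
      case True
      then obtain i w a v where x: "x = (w, Ag i a)" "i \<in> {1..m}" "v \<notin> labels ?C"
        and Ps: "Ps = [(add_mset (i, w, v) R, add_mset (v, a) (add_mset x G))]"
        unfolding ag_principal_def by auto
      have "deriv m n h' (add_mset (i, w, v) R, add_mset (v, a) (add_mset (w, Ag i a) G))"
        using ruleR(3) Ps x(1) by simp
      moreover have "v \<notin> labels (R, add_mset (w, Ag i a) G)"
        using x by simp
      ultimately have "deriv m n h' (add_mset (i, w, v) R, add_mset (v, a) (add_mset (v, a) G))"
        by (rule deriv_Ag_premise_duplicate)
      then have "deriv m n h' (add_mset (i, w, v) R, add_mset (v, a) G)"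
        using less.IH ruleR(1) by blast
      moreover have "rule_PR m n [(add_mset (i, w, v) R, add_mset (v, a) G)] (R, add_mset x G)"
        using x by (auto intro!: g3_rule_rule_PR g3_rule.agR)
      ultimately show ?thesis
        using ruleR(1) deriv.ruleR by fastforce
    next
      case False
      have stripped: "rule_PR m n (map (\<lambda>P. (fst P, snd P - {#x#})) Ps) (R, add_mset x G)"
        using ruleR(2) by (rule rule_PR_strip_fm) simp
      have "deriv m n h' (fst P, snd P - {#x#})" if P: "P \<in> set Ps" for P
      proof -
        have "count (snd P) x \<ge> 2"
          using rule_PR_premise_count[OF ruleR(2) False P] by simp
        then obtain G\<^sub>P where G\<^sub>P: "snd P = add_mset x (add_mset x G\<^sub>P)"
          by (metis count_ge_2_split)
        then have "deriv m n h' (fst P, add_mset x G\<^sub>P)"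
          using less.IH ruleR(1,3) P by (metis lessI prod.collapse)
        then show ?thesis
          using G\<^sub>P by simp
      qed
      then have "\<forall>Q\<in>set (map (\<lambda>P. (fst P, snd P - {#x#})) Ps). deriv m n h' Q"
        by auto
      with stripped have "deriv m n (Suc h') (R, add_mset x G)"
        by (rule deriv.ruleR)
      then show ?thesis
        using ruleR(1) by simp
    qed
  qed
qed

lemma deriv_contract_ratoms: "deriv m n h (R + R' + R', G) \<Longrightarrow> deriv m n h (R + R', G)"
proof (induction R' arbitrary: R)
  case (add r R')
  then have "deriv m n h (add_mset r (add_mset r (R + R' + R')), G)"
    by simp
  then have "deriv m n h (add_mset r (R + R' + R'), G)"
    by (rule deriv_contract_ratom)
  then have "deriv m n h (add_mset r R + R' + R', G)"
    by simp
  then have "deriv m n h (add_mset r R + R', G)"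
    by (rule add.IH)
  then show ?case
    by simp
qed simp

lemma deriv_contract_fms: "deriv m n h (R, G' + G' + G) \<Longrightarrow> deriv m n h (R, G' + G)"
proof (induction G' arbitrary: G)
  case (add x G')
  then have "deriv m n h (R, add_mset x (add_mset x (G' + G' + G)))"
    by simp
  then have "deriv m n h (R, add_mset x (G' + G' + G))"
    by (rule deriv_contract_fm)
  then have "deriv m n h (R, G' + G' + add_mset x G)"
    by simp
  then have "deriv m n h (R, G' + add_mset x G)"
    by (rule add.IH)
  then show ?case
    by simp
qed simp

abbreviation derivable :: "nat \<Rightarrow> nat \<Rightarrow> seq \<Rightarrow> bool" where
  "derivable m n S \<equiv> \<exists>h. deriv m n h S"

lemma derivable_rule:
  assumes "rule_PR m n Ps C" "\<forall>P\<in>set Ps. derivable m n P"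
  shows "derivable m n C"
proof -
  obtain hs where hs: "\<forall>P\<in>set Ps. deriv m n (hs P) P"
    using bchoice[OF assms(2)] by blast
  have "\<forall>P\<in>set Ps. deriv m n (Max (hs ` set Ps)) P"
    using hs by (auto intro: deriv_mono)
  then show ?thesis
    using assms(1) deriv.ruleR by blast
qed

lemma derivable_conjR:
  assumes "(w, Conj a b) \<in># G" "derivable m n (R, add_mset (w, a) G)" "derivable m n (R, add_mset (w, b) G)"
  shows "derivable m n (R, G)"
proof -
  obtain G\<^sub>0 where "G = add_mset (w, Conj a b) G\<^sub>0"
    using assms(1) by (blast dest: multi_member_split)
  then show ?thesis
    using assms(2,3) g3_rule.conjR[of m n R w a b G\<^sub>0]
    by (intro derivable_rule) (auto simp: add_mset_commute intro: g3_rule_rule_PR)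
qed

lemma derivable_disjR:
  assumes "(w, Disj a b) \<in># G" "derivable m n (R, add_mset (w, a) (add_mset (w, b) G))"
  shows "derivable m n (R, G)"
proof -
  obtain G\<^sub>0 where "G = add_mset (w, Disj a b) G\<^sub>0"
    using assms(1) by (blast dest: multi_member_split)
  then show ?thesis
    using assms(2) g3_rule.disjR[of m n R w a b G\<^sub>0]
    by (intro derivable_rule) (auto simp: add_mset_commute intro: g3_rule_rule_PR)
qed

lemma derivable_boxR:
  assumes "(w, Bx a) \<in># G" "v \<notin> labels (R, G)" "derivable m n (R, add_mset (v, a) G)"
  shows "derivable m n (R, G)"
proof -
  obtain G\<^sub>0 where "G = add_mset (w, Bx a) G\<^sub>0"
    using assms(1) by (blast dest: multi_member_split)
  then show ?thesis
    using assms(2,3) g3_rule.boxR[of v R w a G\<^sub>0 m n]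
    by (intro derivable_rule) (auto simp: add_mset_commute intro: g3_rule_rule_PR)
qed

lemma derivable_diaR:
  assumes "(w, Dm a) \<in># G" "derivable m n (R, add_mset (u, a) G)"
  shows "derivable m n (R, G)"
proof -
  obtain G\<^sub>0 where "G = add_mset (w, Dm a) G\<^sub>0"
    using assms(1) by (blast dest: multi_member_split)
  then show ?thesis
    using assms(2) g3_rule.diaR[of m n R w a u G\<^sub>0]
    by (intro derivable_rule) (auto simp: add_mset_commute intro: g3_rule_rule_PR)
qed

lemma derivable_agR:
  assumes "(w, Ag i a) \<in># G" "i \<in> {1..m}" "v \<notin> labels (R, G)"
    and "derivable m n (add_mset (i, w, v) R, add_mset (v, a) (G - {#(w, Ag i a)#}))"
  shows "derivable m n (R, G)"
proof -
  obtain G\<^sub>0 where "G = add_mset (w, Ag i a) G\<^sub>0"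
    using assms(1) by (blast dest: multi_member_split)
  then show ?thesis
    using assms(2-4) g3_rule.agR[of i m v R w a G\<^sub>0 n]
    by (intro derivable_rule) (auto intro: g3_rule_rule_PR)
qed

lemma derivable_dagR:
  assumes "(w, DAg i a) \<in># G" "(i, w, u) \<in># R" "i \<in> {1..m}" "derivable m n (R, add_mset (u, a) G)"
  shows "derivable m n (R, G)"
proof -
  obtain G\<^sub>0 where "G = add_mset (w, DAg i a) G\<^sub>0"
    using assms(1) by (blast dest: multi_member_split)
  moreover obtain R\<^sub>0 where "R = add_mset (i, w, u) R\<^sub>0"
    using assms(2) by (blast dest: multi_member_split)
  ultimately show ?thesis
    using assms(3,4) g3_rule.dagR[of i m n w u R\<^sub>0 a G\<^sub>0]
    by (intro derivable_rule) (auto simp: add_mset_commute intro: g3_rule_rule_PR)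
qed

lemma derivable_identity:
  "agents \<phi> \<subseteq> {1..m} \<Longrightarrow> (w, \<phi>) \<in># G \<Longrightarrow> (w, neg \<phi>) \<in># G \<Longrightarrow> derivable m n (R, G)"
proof (induction \<phi> arbitrary: R G w)
  case (Atm p)
  then show ?case
    using deriv_idR_mem by fastforce
next
  case (NAtm p)
  then show ?case
    using deriv_idR_mem by fastforce
next
  case (Conj a b)
  let ?G = "add_mset (w, neg a) (add_mset (w, neg b) G)"
  have "derivable m n (R, add_mset (w, a) ?G)"
    using Conj.prems by (intro Conj.IH(1)[of w]) auto
  moreover have "derivable m n (R, add_mset (w, b) ?G)"
    using Conj.prems by (intro Conj.IH(2)[of w]) auto
  ultimately have "derivable m n (R, ?G)"
    by (rule derivable_conjR[rotated]) (use Conj.prems in simp)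
  then show ?case
    by (rule derivable_disjR[rotated]) (use Conj.prems in simp)
next
  case (Disj a b)
  let ?G = "add_mset (w, a) (add_mset (w, b) G)"
  have "derivable m n (R, add_mset (w, neg a) ?G)"
    using Disj.prems by (intro Disj.IH(1)[of w]) auto
  moreover have "derivable m n (R, add_mset (w, neg b) ?G)"
    using Disj.prems by (intro Disj.IH(2)[of w]) auto
  ultimately have "derivable m n (R, ?G)"
    by (rule derivable_conjR[rotated]) (use Disj.prems in simp)
  then show ?case
    by (rule derivable_disjR[rotated]) (use Disj.prems in simp)
next
  case (Bx a)
  obtain v where v: "v \<notin> labels (R, G)"
    using ex_fresh_label by blast
  have "derivable m n (R, add_mset (v, neg a) (add_mset (v, a) G))"
    using Bx.prems by (intro Bx.IH[of v]) auto
  then have "derivable m n (R, add_mset (v, a) G)"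
    by (rule derivable_diaR[of w "neg a", rotated]) (use Bx.prems in simp)
  then show ?case
    by (rule derivable_boxR[of w a, rotated 2]) (use Bx.prems v in simp_all)
next
  case (Dm a)
  obtain v where v: "v \<notin> labels (R, G)"
    using ex_fresh_label by blast
  have "derivable m n (R, add_mset (v, a) (add_mset (v, neg a) G))"
    using Dm.prems by (intro Dm.IH[of v]) auto
  then have "derivable m n (R, add_mset (v, neg a) G)"
    by (rule derivable_diaR[of w a, rotated]) (use Dm.prems in simp)
  then show ?case
    by (rule derivable_boxR[of w "neg a", rotated 2]) (use Dm.prems v in simp_all)
next
  case (Ag i a)
  obtain v where v: "v \<notin> labels (R, G)"
    using ex_fresh_label by blast
  let ?R = "add_mset (i, w, v) R" and ?G = "add_mset (v, a) (G - {#(w, Ag i a)#})"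
  have "derivable m n (?R, add_mset (v, neg a) ?G)"
    using Ag.prems by (intro Ag.IH[of v]) auto
  then have "derivable m n (?R, ?G)"
    by (rule derivable_dagR[of w i "neg a" _ v, rotated 3]) (use Ag.prems in \<open>simp_all add: in_diff_count\<close>)
  then show ?case
    by (rule derivable_agR[rotated 3]) (use Ag.prems v in simp_all)
next
  case (DAg i a)
  obtain v where v: "v \<notin> labels (R, G)"
    using ex_fresh_label by blast
  let ?R = "add_mset (i, w, v) R" and ?G = "add_mset (v, neg a) (G - {#(w, Ag i (neg a))#})"
  have "derivable m n (?R, add_mset (v, a) ?G)"
    using DAg.prems by (intro DAg.IH[of v]) auto
  then have "derivable m n (?R, ?G)"
    by (rule derivable_dagR[of w i a _ v, rotated 3]) (use DAg.prems in \<open>simp_all add: in_diff_count\<close>)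
  then show ?case
    by (rule derivable_agR[rotated 3]) (use DAg.prems v in simp_all)
qed

theorem lemma1:
  fixes m n :: nat
  assumes "1 \<le> m"
  shows
    "(\<forall>R G w \<phi>. wf_seq m (R, add_mset (w, \<phi>) (add_mset (w, neg \<phi>) G)) \<longrightarrow>
        (\<exists>h. deriv m n h (R, add_mset (w, \<phi>) (add_mset (w, neg \<phi>) G))))
   \<and> (\<forall>h S x y. wf_seq m S \<longrightarrow> deriv m n h S \<longrightarrow> deriv m n h (subst_seq y x S))
   \<and> (\<forall>h Ps C. rule_PR m n Ps C \<longrightarrow> wf_seq m C \<longrightarrow> deriv m n h C \<longrightarrow>
        (\<forall>P \<in> set Ps. deriv m n h P))
   \<and> (\<forall>h R R' G G'. wf_seq m (R + R', G' + G) \<longrightarrow>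
        deriv m n h (R, G) \<longrightarrow> deriv m n h (R + R', G' + G))
   \<and> (\<forall>h R R' G. wf_seq m (R + R' + R', G) \<longrightarrow>
        deriv m n h (R + R' + R', G) \<longrightarrow> deriv m n h (R + R', G))
   \<and> (\<forall>h R G G'. wf_seq m (R, G' + G' + G) \<longrightarrow>
        deriv m n h (R, G' + G' + G) \<longrightarrow> deriv m n h (R, G' + G))"
proof (intro conjI allI impI ballI)
  fix R G w \<phi>
  assume "wf_seq m (R, add_mset (w, \<phi>) (add_mset (w, neg \<phi>) G))"
  then have "agents \<phi> \<subseteq> {1..m}"
    unfolding wf_seq_def by auto
  then show "\<exists>h. deriv m n h (R, add_mset (w, \<phi>) (add_mset (w, neg \<phi>) G))"
    by (rule derivable_identity[of _ _ w]) simp_all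
next
  fix h S x y
  assume "deriv m n h S"
  then show "deriv m n h (subst_seq y x S)"
    using deriv_rename_add[of m n h S "lsub y x" 0] by (simp add: subst_seq_def rename_seq_def)
next
  fix h Ps C P
  assume "rule_PR m n Ps C" "deriv m n h C" "P \<in> set Ps"
  then show "deriv m n h P"
    by (rule deriv_rule_PR_inv)
next
  fix h R R' G G'
  assume "deriv m n h (R, G)"
  then show "deriv m n h (R + R', G' + G)"
    using deriv_weaken[of m n h "(R, G)" "(R', G')"] by (simp add: add.commute)
next
  fix h R R' G
  assume "deriv m n h (R + R' + R', G)"
  then show "deriv m n h (R + R', G)"
    by (rule deriv_contract_ratoms)
next
  fix h R G G'
  assume "deriv m n h (R, G' + G' + G)"
  then show "deriv m n h (R, G' + G)"
    by (rule deriv_contract_fms)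
qed

end
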